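(* The oriented chromatic number is unbounded on the asymmetrical digraphs of $\mathcal{LE}_2$: for every positive integer $m$ there is an asymmetrical digraph $D\in\mathcal{LE}_2$ with $\chi_o(D)\geq m$.
   Context: All digraphs are finite, without loops or multiple arcs. A digraph is asymmetrical if it has no pair of opposite arcs $(u,v),(v,u)$. For an asymmetrical digraph $D$, an oriented $k$-colouring is a proper colouring $V(D)\to\{1,\ldots,k\}$ (vertices joined by an arc get distinct colours) such that all arcs between any two colour classes have the same direction; the oriented chromatic number $\chi_o(D)$ is the least such $k$. Paths and cycles are directed; the length of a path or cycle is its number of arcs. A digraph is strong if for every ordered pair of vertices $x,y$ there is a directed path from $x$ to $y$. For a subdigraph $H$ of a digraph $D$, an ear of $H$ in $D$ is either a directed path in $D$ whose two end vertices lie in $H$ and whose internal vertices do not lie in $H$, or a directed cycle in $D$ having exactly one vertex in $H$. An ear decomposition of a strong digraph $D$ is a sequence $(D_0,D_1,\ldots,D_k)$ of strong subdigraphs of $D$ such that $D_0$ is a directed cycle, $D_{j+1}=D_j\cup P_j$ where $P_j$ is an ear of $D_j$ in $D$ for every $j\in\{0,\ldots,k-1\}$, and $D_k=D$. For an integer $i\geq 1$, $\mathcal{LE}_i$ denotes the family of strong digraphs having an ear decomposition in which every ear has length at least $i$. *)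

theory Defs
  imports Main
begin

definition digraph :: "'a set \<Rightarrow> ('a \<times> 'a) set \<Rightarrow> bool" where
  "digraph V A \<longleftrightarrow> finite V \<and> A \<subseteq> V \<times> V \<and> (\<forall>(u,v)\<in>A. u \<noteq> v)"

definition asymmetrical :: "('a \<times> 'a) set \<Rightarrow> bool" where
  "asymmetrical A \<longleftrightarrow> (\<forall>u v. (u,v) \<in> A \<longrightarrow> (v,u) \<notin> A)"

text \<open>Oriented k-colouring: proper, colours in {1..k}, and all arcs between two
colour classes have the same direction.\<close>

definition oriented_colouring :: "'a set \<Rightarrow> ('a \<times> 'a) set \<Rightarrow> nat \<Rightarrow> ('a \<Rightarrow> nat) \<Rightarrow> bool" where
  "oriented_colouring V A k c \<longleftrightarrow>
     (\<forall>v\<in>V. c v \<in> {1..k}) \<and>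
     (\<forall>(u,v)\<in>A. c u \<noteq> c v) \<and>
     (\<forall>(u,v)\<in>A. \<forall>(x,y)\<in>A. \<not> (c u = c y \<and> c v = c x))"

definition oriented_chromatic_number :: "'a set \<Rightarrow> ('a \<times> 'a) set \<Rightarrow> nat" where
  "oriented_chromatic_number V A = (LEAST k. \<exists>c. oriented_colouring V A k c)"

definition path_arcs :: "'a list \<Rightarrow> ('a \<times> 'a) set" where
  "path_arcs ps = set (zip ps (tl ps))"

definition cycle_arcs :: "'a list \<Rightarrow> ('a \<times> 'a) set" where
  "cycle_arcs ps = insert (last ps, hd ps) (path_arcs ps)"

definition is_dpath :: "('a \<times> 'a) set \<Rightarrow> 'a list \<Rightarrow> bool" where
  "is_dpath A ps \<longleftrightarrow> distinct ps \<and> length ps \<ge> 2 \<and> path_arcs ps \<subseteq> A"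

definition is_dcycle :: "('a \<times> 'a) set \<Rightarrow> 'a list \<Rightarrow> bool" where
  "is_dcycle A ps \<longleftrightarrow> distinct ps \<and> length ps \<ge> 2 \<and> cycle_arcs ps \<subseteq> A"

definition subdigraph :: "'a set \<Rightarrow> ('a \<times> 'a) set \<Rightarrow> 'a set \<Rightarrow> ('a \<times> 'a) set \<Rightarrow> bool" where
  "subdigraph VH AH V A \<longleftrightarrow> VH \<subseteq> V \<and> AH \<subseteq> A \<and> AH \<subseteq> VH \<times> VH"

definition strong :: "'a set \<Rightarrow> ('a \<times> 'a) set \<Rightarrow> bool" where
  "strong V A \<longleftrightarrow> (\<forall>x\<in>V. \<forall>y\<in>V. (x,y) \<in> (A \<inter> V \<times> V)\<^sup>*)"

definition is_ear :: "('a \<times> 'a) set \<Rightarrow> 'a set \<Rightarrow> 'a list \<Rightarrow> 'a set \<Rightarrow> ('a \<times> 'a) set \<Rightarrow> nat \<Rightarrow> bool" where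
  "is_ear A VH ps EV EA len \<longleftrightarrow>
     (is_dpath A ps \<and> hd ps \<in> VH \<and> last ps \<in> VH \<and>
        (\<forall>v\<in>set (butlast (tl ps)). v \<notin> VH) \<and>
        EV = set ps \<and> EA = path_arcs ps \<and> len = length ps - 1)
   \<or> (is_dcycle A ps \<and> card (set ps \<inter> VH) = 1 \<and>
        EV = set ps \<and> EA = cycle_arcs ps \<and> len = length ps)"

definition ear_decomposition_min :: "nat \<Rightarrow> 'a set \<Rightarrow> ('a \<times> 'a) set \<Rightarrow> nat \<Rightarrow> (nat \<Rightarrow> 'a set \<times> ('a \<times> 'a) set) \<Rightarrow> bool" where
  "ear_decomposition_min i V A k Ds \<longleftrightarrow>
     (\<forall>j\<le>k. subdigraph (fst (Ds j)) (snd (Ds j)) V A \<and> strong (fst (Ds j)) (snd (Ds j))) \<and>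
     (\<exists>cyc. is_dcycle A cyc \<and> Ds 0 = (set cyc, cycle_arcs cyc)) \<and>
     (\<forall>j<k. \<exists>ps EV EA len. is_ear A (fst (Ds j)) ps EV EA len \<and> len \<ge> i \<and>
             Ds (Suc j) = (fst (Ds j) \<union> EV, snd (Ds j) \<union> EA)) \<and>
     Ds k = (V, A)"

definition LE :: "nat \<Rightarrow> 'a set \<Rightarrow> ('a \<times> 'a) set \<Rightarrow> bool" where
  "LE i V A \<longleftrightarrow> digraph V A \<and> strong V A \<and> (\<exists>k Ds. ear_decomposition_min i V A k Ds)"

end

theory Submission
  imports Defs
begin

text \<open>Take a directed cycle on n \<ge> 3 vertices and, for every pair i < j of its vertices,
a new vertex w with arcs i \<rightarrow> w \<rightarrow> j. Each such 2-path is an ear of length 2, so the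
digraph lies in LE 2, and it is asymmetrical. In an oriented colouring the ends of a
directed 2-path u \<rightarrow> w \<rightarrow> v get distinct colours, since otherwise the arcs between the
classes of u and w would run in both directions. Hence the n cycle vertices receive
pairwise distinct colours.\<close>

lemma path_arcs_conv_nth: "path_arcs ps = {(ps!i, ps!Suc i) | i. Suc i < length ps}"
  unfolding path_arcs_def set_zip by (auto simp: nth_tl)

lemma cycle_arcs_conv_nth:
  assumes "ps \<noteq> []"
  shows "cycle_arcs ps = {(ps!i, ps!(Suc i mod length ps)) | i. i < length ps}"
proof -
  let ?n = "length ps"
  have "{..<?n} = insert (?n - 1) {i. Suc i < ?n}" using assms by auto
  moreover have "(ps!i, ps!(Suc i mod ?n)) = (ps!i, ps!Suc i)" if "Suc i < ?n" for i
    using that by simp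
  moreover have "(ps!(?n - 1), ps!(Suc (?n - 1) mod ?n)) = (last ps, hd ps)"
    using assms by (simp add: last_conv_nth hd_conv_nth)
  ultimately have "(\<lambda>i. (ps!i, ps!(Suc i mod ?n))) ` {..<?n} = cycle_arcs ps"
    unfolding cycle_arcs_def path_arcs_conv_nth by auto
  then show ?thesis by blast
qed

lemma cycle_arcs_subset: "ps \<noteq> [] \<Longrightarrow> cycle_arcs ps \<subseteq> set ps \<times> set ps"
  by (auto simp: cycle_arcs_conv_nth)

lemma cycle_arc_neq:
  assumes "distinct ps" "length ps \<ge> 2" "(u, v) \<in> cycle_arcs ps"
  shows "u \<noteq> v"
proof -
  have "ps \<noteq> []" using assms(2) by auto
  then obtain i where i: "i < length ps" "u = ps!i" "v = ps!(Suc i mod length ps)"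
    using assms(3) by (auto simp: cycle_arcs_conv_nth)
  have "Suc i mod length ps \<noteq> i"
  proof (cases "Suc i < length ps")
    case False
    then have "Suc i = length ps" using i(1) by simp
    then show ?thesis using assms(2) by auto
  qed simp
  moreover have "Suc i mod length ps < length ps" using \<open>ps \<noteq> []\<close> by simp
  ultimately show ?thesis using i assms(1) by (simp add: nth_eq_iff_index_eq)
qed

lemma asymmetrical_cycle_arcs:
  assumes "distinct ps" "length ps \<ge> 3"
  shows "asymmetrical (cycle_arcs ps)"
  unfolding asymmetrical_def
proof (intro allI impI notI)
  fix u v assume "(u, v) \<in> cycle_arcs ps" "(v, u) \<in> cycle_arcs ps"
  moreover have "ps \<noteq> []" using assms(2) by auto
  ultimately obtain i j where "i < length ps" "j < length ps" "u = ps!i" "v = ps!(Suc i mod length ps)"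
    "v = ps!j" "u = ps!(Suc j mod length ps)"
    by (auto simp: cycle_arcs_conv_nth)
  then have j: "j = Suc i mod length ps" and i: "i = Suc j mod length ps"
    using assms(1) by (simp_all add: nth_eq_iff_index_eq \<open>ps \<noteq> []\<close>)
  from i have "(i + 2) mod length ps = i" unfolding j mod_Suc_eq by simp
  then show False
  proof (cases "i + 2 < length ps")
    case False
    moreover have "i + 2 - length ps < length ps" using \<open>i < length ps\<close> assms(2) by linarith
    ultimately have "(i + 2) mod length ps = i + 2 - length ps" by (simp add: le_mod_geq)
    then show False using \<open>(i + 2) mod length ps = i\<close> assms(2) False by linarith
  qed simp
qed

lemma cycle_arcs_rtrancl:
  assumes "ps \<noteq> []" "x \<in> set ps" "y \<in> set ps"
  shows "(x, y) \<in> (cycle_arcs ps)\<^sup>*"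
proof -
  let ?n = "length ps"
  have walk: "(ps!i, ps!((i + d) mod ?n)) \<in> (cycle_arcs ps)\<^sup>*" if "i < ?n" for i d
  proof (induction d)
    case 0 then show ?case using that by simp
  next
    case (Suc d)
    have "(ps!((i + d) mod ?n), ps!(Suc ((i + d) mod ?n) mod ?n)) \<in> cycle_arcs ps"
      using assms(1) by (auto simp: cycle_arcs_conv_nth)
    then show ?case using Suc.IH by (simp add: mod_Suc_eq)
  qed
  obtain i j where "i < ?n" "j < ?n" "x = ps!i" "y = ps!j"
    using assms by (auto simp: in_set_conv_nth)
  moreover have "(i + (j + ?n - i)) mod ?n = j" using \<open>i < ?n\<close> \<open>j < ?n\<close> by simp
  ultimately show ?thesis using walk by metis
qed

definition handle_arcs :: "('a \<Rightarrow> 'a) \<Rightarrow> ('a \<Rightarrow> 'a) \<Rightarrow> 'a set \<Rightarrow> ('a \<times> 'a) set" where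
  "handle_arcs src dst X = (\<Union>w\<in>X. {(src w, w), (w, dst w)})"

lemma handle_arcs_insert:
  "handle_arcs src dst (insert w X) = {(src w, w), (w, dst w)} \<union> handle_arcs src dst X"
  by (auto simp: handle_arcs_def)

lemma handle_arcs_mono: "X \<subseteq> Y \<Longrightarrow> handle_arcs src dst X \<subseteq> handle_arcs src dst Y"
  by (auto simp: handle_arcs_def)

lemma cycle_with_handles_arcs_subset:
  assumes "cyc \<noteq> []" "\<forall>w\<in>X. src w \<in> set cyc \<and> dst w \<in> set cyc"
  shows "cycle_arcs cyc \<union> handle_arcs src dst X \<subseteq> (set cyc \<union> X) \<times> (set cyc \<union> X)"
  using cycle_arcs_subset[OF assms(1)] assms(2) by (auto simp: handle_arcs_def)

lemma strong_cycle_with_handles: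
  assumes "cyc \<noteq> []" and ends: "\<forall>w\<in>X. src w \<in> set cyc \<and> dst w \<in> set cyc"
  shows "strong (set cyc \<union> X) (cycle_arcs cyc \<union> handle_arcs src dst X)"
proof -
  let ?V = "set cyc \<union> X" and ?A = "cycle_arcs cyc \<union> handle_arcs src dst X"
  have restrict: "?A \<inter> ?V \<times> ?V = ?A"
    using cycle_with_handles_arcs_subset[OF assms(1) ends] by blast
  have on_cycle: "(a, b) \<in> ?A\<^sup>*" if "a \<in> set cyc" "b \<in> set cyc" for a b
    using cycle_arcs_rtrancl[OF assms(1) that] rtrancl_mono[of "cycle_arcs cyc" ?A] by blast
  have exit: "\<exists>a\<in>set cyc. (x, a) \<in> ?A\<^sup>*" if "x \<in> ?V" for x
  proof (cases "x \<in> X")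
    case True
    then have "(x, dst x) \<in> ?A" by (auto simp: handle_arcs_def)
    then show ?thesis using ends True by blast
  qed (use that in auto)
  have entry: "\<exists>b\<in>set cyc. (b, y) \<in> ?A\<^sup>*" if "y \<in> ?V" for y
  proof (cases "y \<in> X")
    case True
    then have "(src y, y) \<in> ?A" by (auto simp: handle_arcs_def)
    then show ?thesis using ends True by blast
  qed (use that in auto)
  show ?thesis
    unfolding strong_def restrict using exit entry on_cycle by (meson rtrancl_trans)
qed

lemma two_path_is_ear:
  assumes "(a, w) \<in> A" "(w, b) \<in> A" "a \<in> VH" "b \<in> VH" "w \<notin> VH" "a \<noteq> b"
  shows "is_ear A VH [a, w, b] {a, w, b} {(a, w), (w, b)} 2"
  using assms by (auto simp: is_ear_def is_dpath_def path_arcs_def)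

lemma digraph_cycle_with_handles:
  assumes cyc: "distinct cyc" "length cyc \<ge> 2"
    and X: "finite X" "X \<inter> set cyc = {}"
    and ends: "\<forall>w\<in>X. src w \<in> set cyc \<and> dst w \<in> set cyc"
  shows "digraph (set cyc \<union> X) (cycle_arcs cyc \<union> handle_arcs src dst X)"
proof -
  have "cyc \<noteq> []" using cyc(2) by auto
  have "u \<noteq> v" if "(u, v) \<in> cycle_arcs cyc \<union> handle_arcs src dst X" for u v
    using that cycle_arc_neq[OF cyc] ends X(2) by (fastforce simp: handle_arcs_def)
  then show ?thesis
    unfolding digraph_def using X(1) cycle_with_handles_arcs_subset[OF \<open>cyc \<noteq> []\<close> ends] by auto
qed

lemma LE2_cycle_with_handles:
  assumes cyc: "distinct cyc" "length cyc \<ge> 2"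
    and X: "finite X" "X \<inter> set cyc = {}"
    and ends: "\<forall>w\<in>X. src w \<in> set cyc \<and> dst w \<in> set cyc \<and> src w \<noteq> dst w"
  shows "LE 2 (set cyc \<union> X) (cycle_arcs cyc \<union> handle_arcs src dst X)"
proof -
  let ?V = "set cyc \<union> X" and ?A = "cycle_arcs cyc \<union> handle_arcs src dst X"
  have "cyc \<noteq> []" using cyc(2) by auto
  obtain ws where ws: "distinct ws" "set ws = X" using finite_distinct_list[OF X(1)] by blast
  define Ds where "Ds t = (set cyc \<union> set (take t ws),
    cycle_arcs cyc \<union> handle_arcs src dst (set (take t ws)))" for t
  have ends_cyc: "\<forall>w\<in>X. src w \<in> set cyc \<and> dst w \<in> set cyc" using ends by blast
  then have ends_take: "\<forall>w\<in>set (take t ws). src w \<in> set cyc \<and> dst w \<in> set cyc" for t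
    using ws(2) by (auto dest: in_set_takeD)
  have "ear_decomposition_min 2 ?V ?A (length ws) Ds"
    unfolding ear_decomposition_min_def
  proof (intro conjI allI impI)
    fix j
    show "subdigraph (fst (Ds j)) (snd (Ds j)) ?V ?A"
      unfolding subdigraph_def Ds_def
      using cycle_with_handles_arcs_subset[OF \<open>cyc \<noteq> []\<close> ends_take] set_take_subset[of j ws]
        handle_arcs_mono[OF set_take_subset[of j ws], of src dst] ws(2) by auto
    show "strong (fst (Ds j)) (snd (Ds j))"
      unfolding Ds_def using strong_cycle_with_handles[OF \<open>cyc \<noteq> []\<close> ends_take] by simp
  next
    show "\<exists>cyc'. is_dcycle ?A cyc' \<and> Ds 0 = (set cyc', cycle_arcs cyc')"
      using cyc by (auto simp: Ds_def is_dcycle_def handle_arcs_def)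
  next
    fix j assume j: "j < length ws"
    let ?w = "ws!j"
    have take_Suc: "set (take (Suc j) ws) = insert ?w (set (take j ws))"
      using j by (simp add: take_Suc_conv_app_nth)
    have "?w \<in> X" using j ws(2) by auto
    have "?w \<notin> set (take j ws)"
      using ws(1) j by (simp add: in_set_conv_nth nth_eq_iff_index_eq)
    then have "is_ear ?A (fst (Ds j)) [src ?w, ?w, dst ?w]
        {src ?w, ?w, dst ?w} {(src ?w, ?w), (?w, dst ?w)} 2"
      using \<open>?w \<in> X\<close> ends X(2)
      by (intro two_path_is_ear) (auto simp: Ds_def handle_arcs_def)
    moreover have "Ds (Suc j) = (fst (Ds j) \<union> {src ?w, ?w, dst ?w},
        snd (Ds j) \<union> {(src ?w, ?w), (?w, dst ?w)})"
      using \<open>?w \<in> X\<close> ends unfolding Ds_def take_Suc handle_arcs_insert by auto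
    ultimately show "\<exists>ps EV EA len. is_ear ?A (fst (Ds j)) ps EV EA len \<and> len \<ge> 2 \<and>
        Ds (Suc j) = (fst (Ds j) \<union> EV, snd (Ds j) \<union> EA)"
      by blast
  next
    show "Ds (length ws) = (?V, ?A)" by (simp add: Ds_def ws(2))
  qed
  then show ?thesis
    unfolding LE_def using digraph_cycle_with_handles[OF cyc X ends_cyc]
      strong_cycle_with_handles[OF \<open>cyc \<noteq> []\<close> ends_cyc] by blast
qed

lemma asymmetrical_cycle_with_handles:
  assumes cyc: "distinct cyc" "length cyc \<ge> 3"
    and X: "X \<inter> set cyc = {}"
    and ends: "\<forall>w\<in>X. src w \<in> set cyc \<and> dst w \<in> set cyc \<and> src w \<noteq> dst w"
  shows "asymmetrical (cycle_arcs cyc \<union> handle_arcs src dst X)"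
  unfolding asymmetrical_def
proof (intro allI impI notI)
  fix u v
  assume uv: "(u, v) \<in> cycle_arcs cyc \<union> handle_arcs src dst X"
    and vu: "(v, u) \<in> cycle_arcs cyc \<union> handle_arcs src dst X"
  have "cyc \<noteq> []" using cyc(2) by auto
  have handle: "(q \<in> X \<and> p = src q \<and> p \<notin> X) \<or> (p \<in> X \<and> q = dst p \<and> q \<notin> X)"
    if "(p, q) \<in> handle_arcs src dst X" for p q
    using that ends X unfolding handle_arcs_def by blast
  have "(p, q) \<notin> handle_arcs src dst X" if "(q, p) \<in> cycle_arcs cyc" for p q
    using that cycle_arcs_subset[OF \<open>cyc \<noteq> []\<close>] handle[of p q] X by blast
  then consider "(u, v) \<in> cycle_arcs cyc" "(v, u) \<in> cycle_arcs cyc"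
    | "(u, v) \<in> handle_arcs src dst X" "(v, u) \<in> handle_arcs src dst X"
    using uv vu by blast
  then show False
  proof cases
    case 1
    then show False using asymmetrical_cycle_arcs[OF cyc] unfolding asymmetrical_def by blast
  next
    case 2
    then show False using handle[of u v] handle[of v u] ends by auto
  qed
qed

lemma oriented_colouring_two_path:
  assumes "oriented_colouring V A k c" "(u, w) \<in> A" "(w, v) \<in> A"
  shows "c u \<noteq> c v"
proof
  assume "c u = c v"
  have "\<forall>(p, q)\<in>A. \<forall>(x, y)\<in>A. \<not> (c p = c y \<and> c q = c x)"
    using assms(1) unfolding oriented_colouring_def by blast
  then have "\<not> (c u = c v \<and> c w = c w)" using assms(2,3) by blast
  then show False using \<open>c u = c v\<close> by simp
qed

lemma card_le_oriented_colouring: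
  assumes "oriented_colouring V A k c" "S \<subseteq> V" "inj_on c S"
  shows "card S \<le> k"
proof -
  have "c ` S \<subseteq> {1..k}" using assms(1,2) unfolding oriented_colouring_def by auto
  then have "card (c ` S) \<le> card {1..k}" by (rule card_mono[rotated]) simp
  then show ?thesis using card_image[OF assms(3)] by simp
qed

lemma oriented_colouring_exists:
  assumes "digraph V A" "asymmetrical A"
  shows "\<exists>c. oriented_colouring V A (card V) c"
proof -
  obtain f where f: "bij_betw f V {0..<card V}"
    using assms(1) ex_bij_betw_finite_nat unfolding digraph_def by blast
  have "oriented_colouring V A (card V) (Suc \<circ> f)"
    unfolding oriented_colouring_def
  proof (intro conjI)
    show "\<forall>v\<in>V. (Suc \<circ> f) v \<in> {1..card V}" using f by (auto dest: bij_betw_apply)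
    have inj: "inj_on f V" using f by (rule bij_betw_imp_inj_on)
    have arcs: "A \<subseteq> V \<times> V" "\<forall>(u, v)\<in>A. u \<noteq> v" using assms(1) unfolding digraph_def by auto
    have same_colour: "x = y" if "x \<in> V" "y \<in> V" "(Suc \<circ> f) x = (Suc \<circ> f) y" for x y
      using inj that by (simp add: inj_on_eq_iff)
    show "\<forall>(u, v)\<in>A. (Suc \<circ> f) u \<noteq> (Suc \<circ> f) v"
      using arcs same_colour by blast
    show "\<forall>(u, v)\<in>A. \<forall>(x, y)\<in>A. \<not> ((Suc \<circ> f) u = (Suc \<circ> f) y \<and> (Suc \<circ> f) v = (Suc \<circ> f) x)"
      using arcs(1) same_colour assms(2) unfolding asymmetrical_def by blast
  qed
  then show ?thesis by blast
qed

lemma oriented_chromatic_number_ge: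
  assumes "digraph V A" "asymmetrical A"
    and "\<And>k c. oriented_colouring V A k c \<Longrightarrow> n \<le> k"
  shows "n \<le> oriented_chromatic_number V A"
proof -
  have "\<exists>k c. oriented_colouring V A k c" using oriented_colouring_exists[OF assms(1,2)] by blast
  then have "\<exists>c. oriented_colouring V A (oriented_chromatic_number V A) c"
    unfolding oriented_chromatic_number_def by (rule LeastI_ex)
  then show ?thesis using assms(3) by blast
qed

text \<open>The pair i < j < n is encoded by the vertex n + i * n + j, which lies above the
cycle vertices 0, ..., n - 1.\<close>

definition pair_handles :: "nat \<Rightarrow> nat set" where
  "pair_handles n = {n + i * n + j | i j. i < j \<and> j < n}"

definition pair_src :: "nat \<Rightarrow> nat \<Rightarrow> nat" where
  "pair_src n w = (w - n) div n"

definition pair_dst :: "nat \<Rightarrow> nat \<Rightarrow> nat" where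
  "pair_dst n w = (w - n) mod n"

lemma pair_src_dst:
  assumes "j < n"
  shows "pair_src n (n + i * n + j) = i" "pair_dst n (n + i * n + j) = j"
proof -
  have "n + i * n + j - n = j + i * n" by simp
  then show "pair_src n (n + i * n + j) = i" "pair_dst n (n + i * n + j) = j"
    using assms by (simp_all add: pair_src_def pair_dst_def)
qed

lemma pair_handles_ends:
  assumes "w \<in> pair_handles n"
  shows "pair_src n w < pair_dst n w" "pair_dst n w < n" "n \<le> w"
proof -
  obtain i j where "i < j" "j < n" "w = n + i * n + j"
    using assms unfolding pair_handles_def by blast
  then show "pair_src n w < pair_dst n w" "pair_dst n w < n" "n \<le> w"
    using pair_src_dst[OF \<open>j < n\<close>, of i] by simp_all
qed

lemma finite_pair_handles: "finite (pair_handles n)"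
proof -
  have "pair_handles n \<subseteq> (\<lambda>(i, j). n + i * n + j) ` ({..<n} \<times> {..<n})"
    unfolding pair_handles_def by (auto simp: image_iff)
  then show ?thesis by (rule finite_subset) simp
qed

lemma pair_handles_disjoint: "pair_handles n \<inter> set [0..<n] = {}"
  by (auto dest: pair_handles_ends(3))

lemma pair_handles_ends_on_cycle:
  "\<forall>w\<in>pair_handles n. pair_src n w \<in> set [0..<n] \<and> pair_dst n w \<in> set [0..<n] \<and>
     pair_src n w \<noteq> pair_dst n w"
  using pair_handles_ends by (fastforce dest: less_trans)

definition pair_digraph_vertices :: "nat \<Rightarrow> nat set" where
  "pair_digraph_vertices n = set [0..<n] \<union> pair_handles n"

definition pair_digraph_arcs :: "nat \<Rightarrow> (nat \<times> nat) set" where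
  "pair_digraph_arcs n =
     cycle_arcs [0..<n] \<union> handle_arcs (pair_src n) (pair_dst n) (pair_handles n)"

lemma LE2_pair_digraph:
  assumes "n \<ge> 2"
  shows "LE 2 (pair_digraph_vertices n) (pair_digraph_arcs n)"
  unfolding pair_digraph_vertices_def pair_digraph_arcs_def
  using LE2_cycle_with_handles[OF distinct_upt _ finite_pair_handles pair_handles_disjoint
      pair_handles_ends_on_cycle] assms by simp

lemma asymmetrical_pair_digraph:
  assumes "n \<ge> 3"
  shows "asymmetrical (pair_digraph_arcs n)"
  unfolding pair_digraph_arcs_def
  using asymmetrical_cycle_with_handles[OF distinct_upt _ pair_handles_disjoint
      pair_handles_ends_on_cycle] assms by simp

lemma oriented_colouring_pair_digraph_ge:
  assumes colouring: "oriented_colouring (pair_digraph_vertices n) (pair_digraph_arcs n) k c"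
  shows "n \<le> k"
proof -
  have "c i \<noteq> c j" if "i < j" "j < n" for i j
  proof -
    define w where "w = n + i * n + j"
    have "w \<in> pair_handles n" unfolding w_def pair_handles_def using that by auto
    then have "(pair_src n w, w) \<in> pair_digraph_arcs n" "(w, pair_dst n w) \<in> pair_digraph_arcs n"
      unfolding pair_digraph_arcs_def handle_arcs_def by blast+
    then have "(i, w) \<in> pair_digraph_arcs n" "(w, j) \<in> pair_digraph_arcs n"
      unfolding w_def pair_src_dst[OF \<open>j < n\<close>] .
    then show ?thesis by (rule oriented_colouring_two_path[OF colouring])
  qed
  then have "inj_on c (set [0..<n])" by (intro linorder_inj_onI') simp
  then show ?thesis
    using card_le_oriented_colouring[OF colouring, of "set [0..<n]"]
    by (simp add: pair_digraph_vertices_def)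
qed

theorem mainTheorem19:
  fixes m :: nat
  assumes "m \<ge> 1"
  shows "\<exists>(V :: nat set) (A :: (nat \<times> nat) set).
           digraph V A \<and> asymmetrical A \<and> LE 2 V A \<and> oriented_chromatic_number V A \<ge> m"
proof -
  define n where "n = max 3 m"
  let ?V = "pair_digraph_vertices n" and ?A = "pair_digraph_arcs n"
  have LE: "LE 2 ?V ?A" using LE2_pair_digraph by (simp add: n_def)
  then have digraph: "digraph ?V ?A" unfolding LE_def by blast
  have asym: "asymmetrical ?A" using asymmetrical_pair_digraph by (simp add: n_def)
  have "n \<le> oriented_chromatic_number ?V ?A"
    using oriented_chromatic_number_ge[OF digraph asym oriented_colouring_pair_digraph_ge] .
  then have "m \<le> oriented_chromatic_number ?V ?A" unfolding n_def by simp
  then show ?thesis using digraph asym LE by blast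
qed

end
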